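(* Let $S$ be a hyperbolic Riemann surface with universal cover $\mathbb H^+$ and deck group action $\rho_{can}:\pi_1(S,x_0)\to PSL(2,\mathbb R)$, and let $T^1\mathcal F_{can}=(T^1\mathbb H^+\times\mathbb CP^1)/\pi_1(S,x_0)$ with action $\gamma\cdot(v,z)=(\rho_{can}(\gamma)_*v,\rho_{can}(\gamma)z)$. Let $X_{can}$ be the generator of the foliated geodesic flow on $T^1\mathcal F_{can}$ (induced by the vector field $(X,0)$ on $T^1\mathbb H^+\times\mathbb CP^1$, $X$ the geodesic flow generator of $T^1\mathbb H^+$), and $Y$ the vector field on $T^1\mathcal F_{can}$ induced by $\tilde Y$. Then $X_{can}$ and $Y$ commute. In particular the zero set of $Y$ is invariant by the flow of $X_{can}$, so that $\sigma^+(T^1S)$ and $\sigma^-(T^1S)$ are invariant by the foliated geodesic flow.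
   Context: Let $\iota:\mathbb H^+\to\mathbb CP^1$ be the inclusion. For $v\in T^1\mathbb H^+$ based at $p$, let $\tilde\sigma^+(v),\tilde\sigma^-(v)\in\mathbb RP^1=\partial\mathbb H^+$ be the forward and backward endpoints of the oriented geodesic tangent to $v$, and $Y_v$ the holomorphic vector field on $\mathbb CP^1$ vanishing at $\tilde\sigma^\pm(v)$ with $Y_v(\iota(p))=\iota_*(v)$; $\tilde Y(v,\cdot):=Y_v(\cdot)$ is a vertical vector field on $T^1\mathbb H^+\times\mathbb CP^1$, invariant under $PSL(2,\mathbb R)$, hence induces $Y$ on the quotient. $\sigma^\pm:T^1S\to T^1\mathcal F_{can}$ are the sections induced by $v\mapsto(v,\tilde\sigma^\pm(v))$; they form the zero set of $Y$. *)

theory Defs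
  imports "HOL-Analysis.Analysis"
begin

text \<open>
A unit tangent vector v of the hyperbolic plane H+ (metric |dz|^2/(Im z)^2)
is described by coordinates (x, y, th) with y > 0: its base point is p = x + i y and,
as a vector of C (i.e. iota_* v), it equals y e^(i th) (hyperbolic length 1).
The angle th ranges over R (a covering of the circle; everything is local).
\<close>

type_synonym t1h = "real \<times> real \<times> real"

definition T1H :: "t1h set" where
  "T1H = {(x, y, th). y > 0}"

definition base_pt :: "t1h \<Rightarrow> complex" where
  "base_pt v = (case v of (x, y, th) \<Rightarrow> Complex x y)"

definition vec_C :: "t1h \<Rightarrow> complex" where
  "vec_C v = (case v of (x, y, th) \<Rightarrow> complex_of_real y * cis th)"

text \<open>Generator X of the geodesic flow of T^1 H+ in these coordinates
(unit speed geodesic gamma: gamma' = y e^(i th), and th' = - cos th).\<close>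

definition geod_gen :: "t1h \<Rightarrow> t1h" where
  "geod_gen v = (case v of (x, y, th) \<Rightarrow> (y * cos th, y * sin th, - cos th))"

text \<open>Points of RP^1 = boundary of H+: Some a for a real, None for infinity.\<close>

text \<open>Forward / backward endpoints of the oriented geodesic tangent to v.
For cos th \<noteq> 0 the geodesic is the half circle with centre x + y tan th and
radius y / |cos th|; for cos th = 0 it is the vertical line Re z = x.\<close>

definition sig_plus :: "t1h \<Rightarrow> real option" where
  "sig_plus v = (case v of (x, y, th) \<Rightarrow>
     if cos th = 0 then (if sin th > 0 then None else Some x)
     else Some (x + y * (1 + sin th) / cos th))"

definition sig_minus :: "t1h \<Rightarrow> real option" where
  "sig_minus v = (case v of (x, y, th) \<Rightarrow>
     if cos th = 0 then (if sin th > 0 then Some x else None)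
     else Some (x + y * (sin th - 1) / cos th))"

text \<open>Holomorphic vector fields on CP^1, written in the affine chart C as
z \<mapsto> A + B z + C z^2 (coefficient triple (A,B,C)).  Such a field vanishes at
infinity iff C = 0 (in the chart w = 1/z it reads -(A w^2 + B w + C) d/dw).\<close>

type_synonym holvf = "complex \<times> complex \<times> complex"

definition holvf_eval :: "holvf \<Rightarrow> complex \<Rightarrow> complex" where
  "holvf_eval q z = (case q of (A, B, C) \<Rightarrow> A + B * z + C * z^2)"

definition holvf_vanishes_at :: "holvf \<Rightarrow> real option \<Rightarrow> bool" where
  "holvf_vanishes_at q e = (case e of
      None \<Rightarrow> snd (snd q) = 0
    | Some a \<Rightarrow> holvf_eval q (complex_of_real a) = 0)"

definition Y_field :: "t1h \<Rightarrow> holvf" where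
  "Y_field v = (THE q. holvf_vanishes_at q (sig_plus v) \<and> holvf_vanishes_at q (sig_minus v)
                       \<and> holvf_eval q (base_pt v) = vec_C v)"

type_synonym st = "real \<times> real \<times> real \<times> complex"

definition T1H_CP1 :: "st set" where
  "T1H_CP1 = {(x, y, th, z). y > 0}"

definition X_tilde :: "st \<Rightarrow> st" where
  "X_tilde u = (case u of (x, y, th, z) \<Rightarrow>
     (case geod_gen (x, y, th) of (a, b, c) \<Rightarrow> (a, b, c, 0)))"

definition Y_tilde :: "st \<Rightarrow> st" where
  "Y_tilde u = (case u of (x, y, th, z) \<Rightarrow> (0, 0, 0, holvf_eval (Y_field (x, y, th)) z))"

definition lie_bracket :: "('a::real_normed_vector \<Rightarrow> 'a) \<Rightarrow> ('a \<Rightarrow> 'a) \<Rightarrow> 'a \<Rightarrow> 'a" where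
  "lie_bracket A B u = frechet_derivative B (at u) (A u) - frechet_derivative A (at u) (B u)"

end

theory Submission
  imports Defs
begin

text \<open>
Y_v is the real quadratic field a + b z + c z^2 generating the hyperbolic one-parameter subgroup
of PSL(2,R) that translates along the geodesic tangent to v; its coefficients are explicit
functions of v with discriminant b^2 - 4ac = 1, and the endpoints of the geodesic are its two
zeros.  These coefficients depend only on the geodesic, so they are first integrals of the
geodesic flow.  Since X does not depend on the CP^1 coordinate and Y is vertical, the Lie bracket
reduces to the derivative of the coefficients along X, which therefore vanishes; and the
endpoints, being functions of the coefficients, are constant along flow lines.  Flow lines stay
in the upper half plane because y' = y sin th keeps y^2 e^(2|t|) from decreasing as |t| grows.
\<close>

lemma nonzero_forward_if_log_deriv_ge_minus_one:
  fixes f a :: "real \<Rightarrow> real"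
  assumes deriv: "\<And>t. (f has_real_derivative a t * f t) (at t)"
    and bound: "\<And>t. a t \<ge> -1" and "f 0 \<noteq> 0" and "t \<ge> 0"
  shows "f t \<noteq> 0"
proof -
  have "f 0 ^ 2 * exp (2 * 0) \<le> f t ^ 2 * exp (2 * t)"
  proof (rule DERIV_nonneg_imp_nondecreasing[OF \<open>t \<ge> 0\<close>])
    fix s
    have "((\<lambda>t. f t ^ 2 * exp (2 * t)) has_real_derivative
        2 * f s ^ 2 * exp (2 * s) * (a s + 1)) (at s)"
      by (rule derivative_eq_intros deriv refl | simp)+ (simp add: algebra_simps power2_eq_square)
    moreover have "0 \<le> 2 * f s ^ 2 * exp (2 * s) * (a s + 1)"
      using bound[of s] by simp
    ultimately show "\<exists>y. ((\<lambda>t. f t ^ 2 * exp (2 * t)) has_real_derivative y) (at s) \<and> 0 \<le> y"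
      by blast
  qed
  then show ?thesis using \<open>f 0 \<noteq> 0\<close> by auto
qed

lemma pos_if_log_deriv_bounded:
  fixes f a :: "real \<Rightarrow> real"
  assumes deriv: "\<And>t. (f has_real_derivative a t * f t) (at t)"
    and bound: "\<And>t. \<bar>a t\<bar> \<le> 1" and "f 0 > 0"
  shows "f t > 0"
proof -
  have nonzero: "f s \<noteq> 0" for s
  proof (cases "s \<ge> 0")
    case True
    have "a t \<ge> -1" for t using bound[of t] by linarith
    with True show ?thesis
      using nonzero_forward_if_log_deriv_ge_minus_one[OF deriv] \<open>f 0 > 0\<close> by simp
  next
    case False
    have "((\<lambda>t. f (- t)) has_real_derivative - a (- t) * f (- t)) (at t)" for t
      using DERIV_chain2[OF deriv DERIV_minus[OF DERIV_ident]] by simp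
    moreover have "- a (- t) \<ge> -1" for t using bound[of "- t"] by linarith
    ultimately show ?thesis
      using nonzero_forward_if_log_deriv_ge_minus_one[of "\<lambda>t. f (- t)" "\<lambda>t. - a (- t)" "- s"]
        False \<open>f 0 > 0\<close> by simp
  qed
  have "continuous_on (closed_segment 0 t) f"
    using deriv by (intro continuous_at_imp_continuous_on ballI DERIV_isCont) blast
  moreover have "0 \<in> closed_segment (f 0) (f t)" if "f t \<le> 0"
    using that \<open>f 0 > 0\<close> by (simp add: closed_segment_eq_real_ivl)
  ultimately show ?thesis
    using IVT'_closed_segment_real[of 0 f 0 t] nonzero by force
qed

lemma constant_along_integral_curve:
  fixes K :: "'a::real_normed_vector \<Rightarrow> 'b::real_normed_vector"
  assumes curve: "\<And>t. (c has_vector_derivative F (c t)) (at t)"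
    and deriv: "\<And>t. (K has_derivative DK (c t)) (at (c t))"
    and along: "\<And>t. DK (c t) (F (c t)) = 0"
  shows "K (c t) = K (c 0)"
proof -
  have "((K \<circ> c) has_derivative (\<lambda>h. 0)) (at s within UNIV)" for s
  proof -
    have "((K \<circ> c) has_derivative DK (c s) \<circ> (\<lambda>h. h *\<^sub>R F (c s))) (at s)"
      using diff_chain_at curve deriv unfolding has_vector_derivative_def by blast
    moreover have "DK (c s) \<circ> (\<lambda>h. h *\<^sub>R F (c s)) = (\<lambda>h. 0)"
      using linear_scale[OF has_derivative_linear[OF deriv[of s]]] along[of s] by (simp add: fun_eq_iff)
    ultimately show ?thesis by simp
  qed
  then obtain C where "\<forall>x. (K \<circ> c) x = C"
    using has_derivative_zero_constant[of UNIV "K \<circ> c"] by auto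
  then show ?thesis by simp
qed

lemma frechet_derivative_compose_eq_zero:
  assumes "(g has_derivative g') (at u)" "f differentiable (at (g u))" "g' h = 0"
  shows "frechet_derivative (f \<circ> g) (at u) h = 0"
proof -
  have f: "(f has_derivative frechet_derivative f (at (g u))) (at (g u))"
    using assms(2) frechet_derivative_works by blast
  have "frechet_derivative (f \<circ> g) (at u) = frechet_derivative f (at (g u)) \<circ> g'"
    using diff_chain_at[OF assms(1) f] by (rule frechet_derivative_at[symmetric])
  then show ?thesis
    using linear_0[OF has_derivative_linear[OF f]] assms(3) by simp
qed

lemma frechet_derivative_transform_within_open:
  assumes "f differentiable (at u)" "open S" "u \<in> S" "\<And>x. x \<in> S \<Longrightarrow> f x = g x"
  shows "g differentiable (at u)" and "frechet_derivative g (at u) = frechet_derivative f (at u)"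
proof -
  have "(g has_derivative frechet_derivative f (at u)) (at u)"
    using has_derivative_transform_within_open[OF iffD1[OF frechet_derivative_works assms(1)] assms(2,3)] assms(4)
    by blast
  then show "g differentiable (at u)" and "frechet_derivative g (at u) = frechet_derivative f (at u)"
    by (auto simp: differentiable_def frechet_derivative_at[symmetric])
qed

definition holvf_of_real :: "real \<times> real \<times> real \<Rightarrow> holvf" where
  "holvf_of_real k = (case k of (a, b, c) \<Rightarrow> (complex_of_real a, complex_of_real b, complex_of_real c))"

lemma holvf_eval_diff: "holvf_eval (q - q') z = holvf_eval q z - holvf_eval q' z"
  by (cases q; cases q') (simp add: holvf_eval_def algebra_simps)

lemma holvf_vanishes_at_diff:
  "holvf_vanishes_at q e \<Longrightarrow> holvf_vanishes_at q' e \<Longrightarrow> holvf_vanishes_at (q - q') e"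
  by (cases e) (auto simp: holvf_vanishes_at_def holvf_eval_diff)

lemma quadratic_eq_zero_if_three_roots:
  fixes A B C a b p :: complex
  assumes "A + B*a + C*a^2 = 0" "A + B*b + C*b^2 = 0" "A + B*p + C*p^2 = 0"
    and "a \<noteq> b" "p \<noteq> a" "p \<noteq> b"
  shows "A = 0 \<and> B = 0 \<and> C = 0"
proof -
  have "(a - b) * (B + C*(a+b)) = (A + B*a + C*a^2) - (A + B*b + C*b^2)"
    by (simp add: algebra_simps power2_eq_square)
  then have "(a - b) * (B + C*(a+b)) = 0" using assms(1,2) by simp
  then have B: "B = - C*(a+b)" using assms(4) by (simp add: eq_neg_iff_add_eq_0)
  have "A = (A + B*a + C*a^2) + C*a*b" unfolding B by (simp add: algebra_simps power2_eq_square)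
  then have A: "A = C*a*b" using assms(1) by simp
  have "C * ((p-a)*(p-b)) = 0" using assms(3) unfolding A B by (simp add: algebra_simps power2_eq_square)
  then show ?thesis using A B assms(5,6) by simp
qed

lemma holvf_eq_zero_if_three_zeros:
  assumes "holvf_vanishes_at q e1" "holvf_vanishes_at q e2" "e1 \<noteq> e2"
    and "holvf_eval q p = 0" "p \<notin> \<real>"
  shows "q = 0"
proof -
  obtain A B C where q: "q = (A, B, C)" by (cases q)
  have ne: "p \<noteq> complex_of_real a" for a using assms(5) by auto
  consider (finite) a b where "e1 = Some a" "e2 = Some b" "a \<noteq> b"
    | (infinite) a where "{e1, e2} = {Some a, None}"
    using assms(3) by (cases e1; cases e2) (auto simp: insert_commute)
  then show ?thesis
  proof cases
    case (finite a b)
    then show ?thesis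
      using quadratic_eq_zero_if_three_roots[of A B "of_real a" C "of_real b" p] assms(1,2,4) ne q
      by (simp add: holvf_vanishes_at_def holvf_eval_def zero_prod_def)
  next
    case (infinite a)
    then have "C = 0" "A + B * of_real a = 0" "A + B * p = 0"
      using assms(1,2,4) q by (auto simp: doubleton_eq_iff holvf_vanishes_at_def holvf_eval_def)
    moreover have "B * (p - of_real a) = (A + B * p) - (A + B * of_real a)"
      by (simp add: algebra_simps)
    ultimately show ?thesis using ne q by (simp add: zero_prod_def)
  qed
qed

text \<open>For b^2 - 4 a c = 1 these are the two zeros (- b - 1)/(2c) and (- b + 1)/(2c) of the
  field a + b z + c z^2 on CP^1; for c = 0 one of them is \<infinity>.\<close>
definition endpoint_plus :: "real \<times> real \<times> real \<Rightarrow> real option" where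
  "endpoint_plus k = (case k of (a, b, c) \<Rightarrow>
     if c = 0 then (if b > 0 then None else Some (- a / b)) else Some (- (b + 1) / (2 * c)))"

definition endpoint_minus :: "real \<times> real \<times> real \<Rightarrow> real option" where
  "endpoint_minus k = (case k of (a, b, c) \<Rightarrow>
     if c = 0 then (if b > 0 then Some (- a / b) else None) else Some ((1 - b) / (2 * c)))"

lemma endpoint_plus_neq_minus: "endpoint_plus k \<noteq> endpoint_minus k"
  by (auto simp: endpoint_plus_def endpoint_minus_def divide_simps split: prod.splits)

lemma holvf_of_real_vanishes_at_iff:
  "holvf_vanishes_at (holvf_of_real (a, b, c)) (Some z) \<longleftrightarrow> a + b * z + c * z^2 = 0"
  "holvf_vanishes_at (holvf_of_real (a, b, c)) None \<longleftrightarrow> c = 0"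
proof -
  have "holvf_eval (holvf_of_real (a, b, c)) (complex_of_real z) = complex_of_real (a + b * z + c * z^2)"
    by (simp add: holvf_eval_def holvf_of_real_def)
  then show "holvf_vanishes_at (holvf_of_real (a, b, c)) (Some z) \<longleftrightarrow> a + b * z + c * z^2 = 0"
    by (simp only: holvf_vanishes_at_def option.case of_real_eq_0_iff)
qed (simp add: holvf_vanishes_at_def holvf_of_real_def)

lemma holvf_vanishes_at_endpoints:
  assumes "b^2 - 4 * a * c = 1"
  shows "holvf_vanishes_at (holvf_of_real (a, b, c)) (endpoint_plus (a, b, c))"
    and "holvf_vanishes_at (holvf_of_real (a, b, c)) (endpoint_minus (a, b, c))"
proof -
  have root: "a + b * ((- b + s) / (2 * c)) + c * ((- b + s) / (2 * c))^2 = 0"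
    if "c \<noteq> 0" "s^2 = 1" for s
  proof -
    have "4 * c * (a + b * ((- b + s) / (2 * c)) + c * ((- b + s) / (2 * c))^2) = 4 * a * c - b^2 + s^2"
      using that(1) by (simp add: field_simps power2_eq_square)
    also have "\<dots> = 0" using assms that(2) by simp
    finally show ?thesis using that(1) by simp
  qed
  have "b \<noteq> 0" if "c = 0" using assms that by auto
  then show "holvf_vanishes_at (holvf_of_real (a, b, c)) (endpoint_plus (a, b, c))"
    and "holvf_vanishes_at (holvf_of_real (a, b, c)) (endpoint_minus (a, b, c))"
    using root[of "-1"] root[of 1]
    by (auto simp: endpoint_plus_def endpoint_minus_def holvf_of_real_vanishes_at_iff)
qed

lemma cos_eq_0_imp_sin_eq_1_or_minus_1: "cos (th::real) = 0 \<Longrightarrow> sin th = 1 \<or> sin th = -1"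
  using sin_cos_squared_add[of th] by (simp add: power2_eq_1_iff)

text \<open>Coefficients of Y_v: the generator of the hyperbolic one-parameter subgroup of PSL(2,R)
  translating along the geodesic tangent to v.\<close>
definition killing :: "t1h \<Rightarrow> real \<times> real \<times> real" where
  "killing v = (case v of (x, y, th) \<Rightarrow>
     (- cos th * x^2 / (2 * y) - sin th * x + cos th * y / 2, sin th + cos th * x / y, - cos th / (2 * y)))"

lemma killing_discriminant:
  assumes "killing v = (a, b, c)" "v \<in> T1H"
  shows "b^2 - 4 * a * c = 1"
proof -
  obtain x y th where v: "v = (x, y, th)" and "y > 0" using assms(2) by (auto simp: T1H_def)
  have "(s + co * x / y)^2 - 4 * (- co * x^2 / (2 * y) - s * x + co * y / 2) * (- co / (2 * y))
      = s^2 + co^2" for s co :: real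
    using \<open>y > 0\<close> by (simp add: field_simps power2_eq_square)
  moreover have "a = - cos th * x^2 / (2 * y) - sin th * x + cos th * y / 2"
    and "b = sin th + cos th * x / y" and "c = - cos th / (2 * y)"
    using assms(1) v by (simp_all add: killing_def)
  ultimately show ?thesis by (metis sin_cos_squared_add)
qed

lemma sig_plus_minus_killing:
  assumes "v \<in> T1H"
  shows "sig_plus v = endpoint_plus (killing v)" "sig_minus v = endpoint_minus (killing v)"
proof -
  obtain x y th where v: "v = (x, y, th)" and "y > 0" using assms by (auto simp: T1H_def)
  then have "sig_plus v = endpoint_plus (killing v) \<and> sig_minus v = endpoint_minus (killing v)"
    using cos_eq_0_imp_sin_eq_1_or_minus_1[of th]
    by (auto simp: sig_plus_def sig_minus_def endpoint_plus_def endpoint_minus_def killing_def field_simps)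
  then show "sig_plus v = endpoint_plus (killing v)" "sig_minus v = endpoint_minus (killing v)"
    by auto
qed

lemma killing_field_properties:
  assumes "v \<in> T1H"
  shows "holvf_vanishes_at (holvf_of_real (killing v)) (sig_plus v)"
    and "holvf_vanishes_at (holvf_of_real (killing v)) (sig_minus v)"
    and "holvf_eval (holvf_of_real (killing v)) (base_pt v) = vec_C v"
proof -
  obtain a b c where k: "killing v = (a, b, c)" by (cases "killing v")
  show "holvf_vanishes_at (holvf_of_real (killing v)) (sig_plus v)"
    and "holvf_vanishes_at (holvf_of_real (killing v)) (sig_minus v)"
    using holvf_vanishes_at_endpoints[OF killing_discriminant[OF k assms]] sig_plus_minus_killing[OF assms] k
    by simp_all
  obtain x y th where v: "v = (x, y, th)" and "y > 0" using assms by (auto simp: T1H_def)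
  then show "holvf_eval (holvf_of_real (killing v)) (base_pt v) = vec_C v"
    by (simp add: holvf_eval_def holvf_of_real_def base_pt_def vec_C_def killing_def complex_eq_iff power2_eq_square)
      (simp add: field_simps)
qed

lemma Y_field_eq_killing:
  assumes "v \<in> T1H"
  shows "Y_field v = holvf_of_real (killing v)"
  unfolding Y_field_def
proof (rule the_equality)
  show "holvf_vanishes_at (holvf_of_real (killing v)) (sig_plus v)
      \<and> holvf_vanishes_at (holvf_of_real (killing v)) (sig_minus v)
      \<and> holvf_eval (holvf_of_real (killing v)) (base_pt v) = vec_C v"
    using killing_field_properties[OF assms] by blast
  fix q
  assume "holvf_vanishes_at q (sig_plus v) \<and> holvf_vanishes_at q (sig_minus v)
      \<and> holvf_eval q (base_pt v) = vec_C v"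
  moreover have "sig_plus v \<noteq> sig_minus v"
    using endpoint_plus_neq_minus sig_plus_minus_killing[OF assms] by simp
  moreover have "base_pt v \<notin> \<real>"
    using assms by (auto simp: T1H_def base_pt_def complex_is_Real_iff)
  ultimately have "q - holvf_of_real (killing v) = 0"
    using killing_field_properties[OF assms]
    by (intro holvf_eq_zero_if_three_zeros[of _ "sig_plus v" "sig_minus v" "base_pt v"])
      (auto intro: holvf_vanishes_at_diff simp: holvf_eval_diff)
  then show "q = holvf_of_real (killing v)" by simp
qed

definition killing_deriv :: "t1h \<Rightarrow> t1h \<Rightarrow> real \<times> real \<times> real" where
  "killing_deriv v h = (case v of (x, y, th) \<Rightarrow> case h of (dx, dy, dth) \<Rightarrow>
     ((- cos th * x / y - sin th) * dx + (cos th * x^2 / (2 * y^2) + cos th / 2) * dy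
        + (sin th * x^2 / (2 * y) - cos th * x - sin th * y / 2) * dth,
      cos th / y * dx - cos th * x / y^2 * dy + (cos th - sin th * x / y) * dth,
      cos th / (2 * y^2) * dy + sin th / (2 * y) * dth))"

lemma killing_has_derivative:
  assumes "v \<in> T1H"
  shows "(killing has_derivative killing_deriv v) (at v)"
proof -
  have y: "fst (snd v) \<noteq> 0" using assms by (auto simp: T1H_def)
  show ?thesis
    unfolding killing_def[abs_def] prod.case_eq_if
    apply (rule has_derivative_eq_rhs)
     apply (rule derivative_eq_intros refl | simp add: y)+
    apply (use y in \<open>auto simp: fun_eq_iff killing_deriv_def field_simps power2_eq_square split: prod.splits\<close>)
    done
qed

lemma killing_deriv_geod_gen:
  assumes "v \<in> T1H"
  shows "killing_deriv v (geod_gen v) = 0"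
  using assms by (auto simp: T1H_def killing_deriv_def geod_gen_def zero_prod_def field_simps power2_eq_square)

lemma geodesic_flow_line_in_T1H:
  assumes "c 0 \<in> T1H" and curve: "\<And>t. (c has_vector_derivative geod_gen (c t)) (at t)"
  shows "c t \<in> T1H"
proof -
  have "((\<lambda>t. fst (snd (c t))) has_real_derivative sin (snd (snd (c t))) * fst (snd (c t))) (at t)" for t
  proof -
    have "((\<lambda>t. fst (snd (c t))) has_derivative (\<lambda>h. fst (snd (h *\<^sub>R geod_gen (c t))))) (at t)"
      using curve[of t] unfolding has_vector_derivative_def
      by (intro has_derivative_fst has_derivative_snd)
    moreover have "(\<lambda>h. fst (snd (h *\<^sub>R geod_gen (c t)))) = (*) (sin (snd (snd (c t))) * fst (snd (c t)))"
      by (auto simp: fun_eq_iff geod_gen_def split: prod.splits)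
    ultimately show ?thesis by (simp add: has_field_derivative_def)
  qed
  from pos_if_log_deriv_bounded[OF this, of t] \<open>c 0 \<in> T1H\<close> show ?thesis
    by (auto simp: T1H_def split: prod.splits)
qed

lemma endpoints_invariant_along_geodesic_flow:
  assumes "c 0 \<in> T1H" and curve: "\<And>t. (c has_vector_derivative geod_gen (c t)) (at t)"
  shows "sig_plus (c t) = sig_plus (c 0)" and "sig_minus (c t) = sig_minus (c 0)"
proof -
  have in_T1H: "c s \<in> T1H" for s using geodesic_flow_line_in_T1H assms by blast
  have "killing (c t) = killing (c 0)"
    using curve killing_has_derivative[OF in_T1H] killing_deriv_geod_gen[OF in_T1H]
    by (rule constant_along_integral_curve)
  then show "sig_plus (c t) = sig_plus (c 0)" and "sig_minus (c t) = sig_minus (c 0)"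
    using sig_plus_minus_killing[OF in_T1H] by metis+
qed

definition base_proj :: "st \<Rightarrow> t1h" where
  "base_proj u = (fst u, fst (snd u), fst (snd (snd u)))"

definition fibre_coord :: "st \<Rightarrow> complex" where
  "fibre_coord u = snd (snd (snd u))"

lemma base_proj_has_derivative: "(base_proj has_derivative base_proj) (at u)"
  unfolding base_proj_def[abs_def] by (rule derivative_eq_intros refl | simp)+

lemma X_tilde_factors: "X_tilde = (\<lambda>v. (fst (geod_gen v), fst (snd (geod_gen v)), snd (snd (geod_gen v)), 0)) \<circ> base_proj"
  by (auto simp: fun_eq_iff X_tilde_def base_proj_def split: prod.splits)

lemma Y_tilde_factors:
  assumes "base_proj u \<in> T1H"
  shows "Y_tilde u = ((\<lambda>(k, z). (0, 0, 0, holvf_eval (holvf_of_real k) z)) \<circ> (\<lambda>u. (killing (base_proj u), fibre_coord u))) u"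
  using Y_field_eq_killing[OF assms]
  by (auto simp: Y_tilde_def base_proj_def fibre_coord_def split: prod.splits)

lemma X_tilde_differentiable_and_kills_vertical:
  shows "X_tilde differentiable (at u)" and "frechet_derivative X_tilde (at u) (Y_tilde u) = 0"
proof -
  let ?G = "\<lambda>v. (fst (geod_gen v), fst (snd (geod_gen v)), snd (snd (geod_gen v)), 0::complex)"
  have G: "?G differentiable (at v)" for v
    unfolding differentiable_def geod_gen_def prod.case_eq_if
    by (intro exI) (rule derivative_eq_intros refl)+
  show "X_tilde differentiable (at u)"
    unfolding X_tilde_factors
    by (rule differentiable_chain_at[OF differentiableI[OF base_proj_has_derivative] G])
  have "base_proj (Y_tilde u) = 0"
    by (auto simp: base_proj_def Y_tilde_def zero_prod_def split: prod.splits)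
  then show "frechet_derivative X_tilde (at u) (Y_tilde u) = 0"
    unfolding X_tilde_factors by (rule frechet_derivative_compose_eq_zero[OF base_proj_has_derivative G])
qed

lemma Y_tilde_differentiable_and_invariant_along_X_tilde:
  assumes "u \<in> T1H_CP1"
  shows "Y_tilde differentiable (at u)" and "frechet_derivative Y_tilde (at u) (X_tilde u) = 0"
proof -
  let ?F = "\<lambda>(k, z). (0::real, 0::real, 0::real, holvf_eval (holvf_of_real k) z)"
  let ?g = "\<lambda>u. (killing (base_proj u), fibre_coord u)"
  have F: "?F differentiable (at w)" for w
    unfolding differentiable_def holvf_eval_def holvf_of_real_def prod.case_eq_if
    by (intro exI) (rule derivative_eq_intros refl)+
  have bu: "base_proj u \<in> T1H" using assms by (auto simp: T1H_CP1_def T1H_def base_proj_def)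
  have g: "(?g has_derivative (\<lambda>h. (killing_deriv (base_proj u) (base_proj h), fibre_coord h))) (at u)"
    unfolding fibre_coord_def[abs_def]
    by (rule derivative_eq_intros diff_chain_at[OF base_proj_has_derivative killing_has_derivative[OF bu],
          unfolded o_def] refl)+
  have Fg: "(?F \<circ> ?g) differentiable (at u)"
    by (rule differentiable_chain_at[OF differentiableI[OF g] F])
  have S: "open {w :: st. fst (snd w) > 0}"
    by (intro open_Collect_less continuous_intros)
  have eq: "(?F \<circ> ?g) w = Y_tilde w" if "w \<in> {w. fst (snd w) > 0}" for w
    using Y_tilde_factors[of w] that by (simp add: T1H_def base_proj_def split: prod.splits)
  have u: "u \<in> {w. fst (snd w) > 0}" using assms by (auto simp: T1H_CP1_def)
  show "Y_tilde differentiable (at u)"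
    using frechet_derivative_transform_within_open(1)[OF Fg S u eq] .
  have "killing_deriv (base_proj u) (base_proj (X_tilde u)) = 0" "fibre_coord (X_tilde u) = 0"
    using killing_deriv_geod_gen[OF bu]
    by (auto simp: X_tilde_def base_proj_def fibre_coord_def split: prod.splits)
  then have "frechet_derivative (?F \<circ> ?g) (at u) (X_tilde u) = 0"
    by (intro frechet_derivative_compose_eq_zero[OF g F]) (simp add: zero_prod_def)
  then show "frechet_derivative Y_tilde (at u) (X_tilde u) = 0"
    using frechet_derivative_transform_within_open(2)[OF Fg S u eq] by metis
qed

lemma lie_bracket_X_tilde_Y_tilde:
  assumes "u \<in> T1H_CP1"
  shows "lie_bracket X_tilde Y_tilde u = 0"
  using X_tilde_differentiable_and_kills_vertical(2) Y_tilde_differentiable_and_invariant_along_X_tilde(2)[OF assms]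
  by (simp add: lie_bracket_def)

theorem proposition7p6:
  shows "(\<forall>u \<in> T1H_CP1. X_tilde differentiable (at u) \<and> Y_tilde differentiable (at u)
              \<and> lie_bracket X_tilde Y_tilde u = 0)
       \<and> (\<forall>c :: real \<Rightarrow> t1h. c 0 \<in> T1H \<and> (\<forall>t. (c has_vector_derivative geod_gen (c t)) (at t))
              \<longrightarrow> (\<forall>t. sig_plus (c t) = sig_plus (c 0) \<and> sig_minus (c t) = sig_minus (c 0)))"
  using X_tilde_differentiable_and_kills_vertical(1) Y_tilde_differentiable_and_invariant_along_X_tilde(1)
    lie_bracket_X_tilde_Y_tilde endpoints_invariant_along_geodesic_flow by blast

end
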